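(* Let $G=(X,\Sigma,\longrightarrow,X_0)$ and $R=(Z,\Sigma,\longrightarrow,Z_0)$ be automata, with $\Sigma=\Sigma_{uc}\cup\Sigma_c$ (disjoint) and required events $\Sigma_r\subseteq\Sigma$. There exists a $\Sigma_{uc}$-admissible (w.r.t. $G$) supervisor $S$ such that $S\|G\sqsubseteq_{cc}R$ if and only if there exists a $\Sigma_{ucr}$-controllability set from $G$ to $R$.
   Context: An automaton is a 4-tuple $A=(Q,\Sigma,\longrightarrow,Q_0)$ where $Q$ is a set of states, $\Sigma$ a finite set of events, ${\longrightarrow}\subseteq Q\times\Sigma\times Q$, and $\emptyset\neq Q_0\subseteq Q$ is the set of initial states. Write $q\xrightarrow{\sigma}q'$ for $(q,\sigma,q')\in{\longrightarrow}$ and $q\xrightarrow{\sigma}$ if $q\xrightarrow{\sigma}q'$ for some $q'$; the relation extends to strings $s\in\Sigma^*$ as usual. A state $q$ is reachable if $q_0\xrightarrow{s}q$ for some $q_0\in Q_0$, $s\in\Sigma^*$. A supervisor is an automaton $S=(Y,\Sigma,\longrightarrow,Y_0)$. The events are partitioned into uncontrollable events $\Sigma_{uc}$ and controllable events $\Sigma_c$, and $\Sigma_r\subseteq\Sigma$ is a fixed set of required events. The synchronous composition is $S\|G=(Y\times X,\Sigma,\longrightarrow,Y_0\times X_0)$ with $(y,x)\xrightarrow{\sigma}(y',x')$ iff $y\xrightarrow{\sigma}y'$ and $x\xrightarrow{\sigma}x'$. $S$ is $\Sigma_{uc}$-admissible w.r.t. $G$ if for every reachable state $(y,x)$ of $S\|G$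 and every $\sigma\in\Sigma_{uc}$, $x\xrightarrow{\sigma}$ implies $(y,x)\xrightarrow{\sigma}$. For automata $A_1=(Q_1,\Sigma,\longrightarrow,Q_{01})$, $A_2=(Q_2,\Sigma,\longrightarrow,Q_{02})$, a relation $\Phi\subseteq Q_1\times Q_2$ is a cc-simulation if: (initial state) every $q_0\in Q_{01}$ has some $p_0\in Q_{02}$ with $(q_0,p_0)\in\Phi$; (forward) for all $(q,p)\in\Phi$, $\sigma\in\Sigma$ and $q\xrightarrow{\sigma}q'$ there is $p'$ with $p\xrightarrow{\sigma}p'$ and $(q',p')\in\Phi$; ($\Sigma_r$-backward) for all $(q,p)\in\Phi$, $\sigma\in\Sigma_r$ and $p\xrightarrow{\sigma}p'$ there is $q'$ with $q\xrightarrow{\sigma}q'$ and $(q',p')\in\Phi$. $A_1\sqsubseteq_{cc}A_2$ means such a $\Phi$ exists. For $W,W'\subseteq X\times Z$ and $\sigma\in\Sigma$, $\mathit{match}_{G,R}(W,\sigma,W')$ holds iff for all $(x,z)\in W$ and all $x'$ with $x\xrightarrow{\sigma}x'$ there exists $z'$ with $z\xrightarrow{\sigma}z'$ and $(x',z')\in W'$. A set $E\subseteq\wp(X\times Z)$ is a $\Sigma_{ucr}$-controllability set from $G$ to $R$ if: (istate) there is $W_0\in E$ such that every $x_0\in X_0$ has some $z_0\in Z_0$ with $(x_0,z_0)\in W_0$; (a) for every $W\in E$ and $\sigma\in\Sigma_{uc}$ there is $W'\in E$ with $\mathit{match}_{G,R}(W,\sigma,W')$; (b) for every $W\in E$, $(x,z)\in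 W$, $\sigma\in\Sigma_r$ and $z'\in Z$ with $z\xrightarrow{\sigma}z'$, there exist $x'\in X$ and $W'\in E$ with $x\xrightarrow{\sigma}x'$, $(x',z')\in W'$ and $\mathit{match}_{G,R}(W,\sigma,W')$. *)

theory Defs
  imports Main
begin

text \<open>An automaton over state type 'q and event type 'e: the state set is UNIV::'q set,
  the event set is UNIV::'e set; we store the transition relation and the initial states.\<close>
type_synonym ('q, 'e) automaton = "('q \<times> 'e \<times> 'q) set \<times> 'q set"

definition trans :: "('q, 'e) automaton \<Rightarrow> ('q \<times> 'e \<times> 'q) set" where
  "trans A = fst A"

definition init :: "('q, 'e) automaton \<Rightarrow> 'q set" where
  "init A = snd A"

definition is_automaton :: "('q, 'e) automaton \<Rightarrow> bool" where
  "is_automaton A \<longleftrightarrow> init A \<noteq> {}"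

inductive steps :: "('q, 'e) automaton \<Rightarrow> 'q \<Rightarrow> 'e list \<Rightarrow> 'q \<Rightarrow> bool" for A where
  steps_nil: "steps A q [] q"
| steps_cons: "(q, \<sigma>, q') \<in> trans A \<Longrightarrow> steps A q' s q'' \<Longrightarrow> steps A q (\<sigma> # s) q''"

definition reachable :: "('q, 'e) automaton \<Rightarrow> 'q \<Rightarrow> bool" where
  "reachable A q \<longleftrightarrow> (\<exists>q0 \<in> init A. \<exists>s. steps A q0 s q)"

definition sync :: "('y, 'e) automaton \<Rightarrow> ('x, 'e) automaton \<Rightarrow> ('y \<times> 'x, 'e) automaton" where
  "sync S G = ({((y, x), \<sigma>, (y', x')) | y x \<sigma> y' x'.
                  (y, \<sigma>, y') \<in> trans S \<and> (x, \<sigma>, x') \<in> trans G},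
               init S \<times> init G)"

definition admissible :: "'e set \<Rightarrow> ('x, 'e) automaton \<Rightarrow> ('y, 'e) automaton \<Rightarrow> bool" where
  "admissible Sigma_uc G S \<longleftrightarrow>
     (\<forall>y x. reachable (sync S G) (y, x) \<longrightarrow>
        (\<forall>\<sigma> \<in> Sigma_uc. (\<exists>x'. (x, \<sigma>, x') \<in> trans G) \<longrightarrow>
                    (\<exists>q'. ((y, x), \<sigma>, q') \<in> trans (sync S G))))"

definition cc_simulation :: "'e set \<Rightarrow> ('q, 'e) automaton \<Rightarrow> ('p, 'e) automaton \<Rightarrow> ('q \<times> 'p) set \<Rightarrow> bool" where
  "cc_simulation Sigma_r A1 A2 \<Phi> \<longleftrightarrow>
     (\<forall>q0 \<in> init A1. \<exists>p0 \<in> init A2. (q0, p0) \<in> \<Phi>) \<and>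
     (\<forall>q p \<sigma> q'. (q, p) \<in> \<Phi> \<longrightarrow> (q, \<sigma>, q') \<in> trans A1 \<longrightarrow>
                  (\<exists>p'. (p, \<sigma>, p') \<in> trans A2 \<and> (q', p') \<in> \<Phi>)) \<and>
     (\<forall>q p \<sigma> p'. (q, p) \<in> \<Phi> \<longrightarrow> \<sigma> \<in> Sigma_r \<longrightarrow> (p, \<sigma>, p') \<in> trans A2 \<longrightarrow>
                  (\<exists>q'. (q, \<sigma>, q') \<in> trans A1 \<and> (q', p') \<in> \<Phi>))"

definition cc_le :: "'e set \<Rightarrow> ('q, 'e) automaton \<Rightarrow> ('p, 'e) automaton \<Rightarrow> bool" where
  "cc_le Sigma_r A1 A2 \<longleftrightarrow> (\<exists>\<Phi>. cc_simulation Sigma_r A1 A2 \<Phi>)"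

definition match :: "('x, 'e) automaton \<Rightarrow> ('z, 'e) automaton \<Rightarrow> ('x \<times> 'z) set \<Rightarrow> 'e \<Rightarrow> ('x \<times> 'z) set \<Rightarrow> bool" where
  "match G R W \<sigma> W' \<longleftrightarrow>
     (\<forall>(x, z) \<in> W. \<forall>x'. (x, \<sigma>, x') \<in> trans G \<longrightarrow>
        (\<exists>z'. (z, \<sigma>, z') \<in> trans R \<and> (x', z') \<in> W'))"

definition controllability_set ::
  "'e set \<Rightarrow> 'e set \<Rightarrow> ('x, 'e) automaton \<Rightarrow> ('z, 'e) automaton \<Rightarrow> ('x \<times> 'z) set set \<Rightarrow> bool" where
  "controllability_set Sigma_uc Sigma_r G R E \<longleftrightarrow>
     (\<exists>W0 \<in> E. \<forall>x0 \<in> init G. \<exists>z0 \<in> init R. (x0, z0) \<in> W0) \<and>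
     (\<forall>W \<in> E. \<forall>\<sigma> \<in> Sigma_uc. \<exists>W' \<in> E. match G R W \<sigma> W') \<and>
     (\<forall>W \<in> E. \<forall>(x, z) \<in> W. \<forall>\<sigma> \<in> Sigma_r. \<forall>z'. (z, \<sigma>, z') \<in> trans R \<longrightarrow>
        (\<exists>x'. \<exists>W' \<in> E. (x, \<sigma>, x') \<in> trans G \<and> (x', z') \<in> W' \<and> match G R W \<sigma> W'))"

end

theory Submission
  imports Defs
begin

text \<open>
  A supervisor S with S || G cc-simulated by R via \<Phi> yields, for each supervisor state y, the set
  of pairs (x, z) such that (y, x) is reachable and simulated by z; these sets form a
  controllability set, since the supervisor's moves give the matches required by (a) and (b),
  and admissibility makes an uncontrollable event blocked by S impossible from such an x.
  Conversely, a controllability set E is itself a supervisor: its states are the members of E and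
  W moves to W' on \<sigma> whenever match G R W \<sigma> W', and the relation ((W, x), z) iff (x, z) \<in> W is a
  cc-simulation.
\<close>

lemma trans_sync [simp]:
  "((y, x), \<sigma>, (y', x')) \<in> trans (sync S G) \<longleftrightarrow> (y, \<sigma>, y') \<in> trans S \<and> (x, \<sigma>, x') \<in> trans G"
  by (simp add: sync_def trans_def)

lemma init_sync [simp]: "init (sync S G) = init S \<times> init G"
  by (simp add: sync_def init_def)

lemma reachable_init: "q \<in> init A \<Longrightarrow> reachable A q"
  unfolding reachable_def by (meson steps.steps_nil)

lemma steps_snoc: "steps A q s q' \<Longrightarrow> (q', \<sigma>, q'') \<in> trans A \<Longrightarrow> steps A q (s @ [\<sigma>]) q''"
  by (induction rule: steps.induct) (auto intro: steps.intros)

lemma reachable_trans: "reachable A q \<Longrightarrow> (q, \<sigma>, q') \<in> trans A \<Longrightarrow> reachable A q'"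
  unfolding reachable_def by (meson steps_snoc)

lemma admissible_if_total:
  assumes "\<And>y \<sigma>. \<sigma> \<in> Sigma_uc \<Longrightarrow> \<exists>y'. (y, \<sigma>, y') \<in> trans S"
  shows "admissible Sigma_uc G S"
  unfolding admissible_def using assms by fastforce

definition simulated_pairs ::
  "('y, 'e) automaton \<Rightarrow> ('x, 'e) automaton \<Rightarrow> (('y \<times> 'x) \<times> 'z) set \<Rightarrow> 'y \<Rightarrow> ('x \<times> 'z) set" where
  "simulated_pairs S G \<Phi> y = {(x, z). reachable (sync S G) (y, x) \<and> ((y, x), z) \<in> \<Phi>}"

lemma match_simulated_pairs:
  assumes "cc_simulation Sigma_r (sync S G) R \<Phi>" and "(y, \<sigma>, y') \<in> trans S"
  shows "match G R (simulated_pairs S G \<Phi> y) \<sigma> (simulated_pairs S G \<Phi> y')"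
  unfolding match_def
proof (intro ballI allI impI, clarify)
  fix x z x'
  assume "(x, z) \<in> simulated_pairs S G \<Phi> y" and "(x, \<sigma>, x') \<in> trans G"
  then have reach: "reachable (sync S G) (y, x)" and "((y, x), z) \<in> \<Phi>"
    and step: "((y, x), \<sigma>, (y', x')) \<in> trans (sync S G)"
    using assms(2) by (auto simp: simulated_pairs_def)
  then obtain z' where "(z, \<sigma>, z') \<in> trans R" "((y', x'), z') \<in> \<Phi>"
    using assms(1) unfolding cc_simulation_def by blast
  then show "\<exists>z'. (z, \<sigma>, z') \<in> trans R \<and> (x', z') \<in> simulated_pairs S G \<Phi> y'"
    using reachable_trans[OF reach step] by (auto simp: simulated_pairs_def)
qed

lemma match_simulated_pairs_blocked:
  assumes "admissible Sigma_uc G S" and "\<sigma> \<in> Sigma_uc" and "\<nexists>y'. (y, \<sigma>, y') \<in> trans S"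
  shows "match G R (simulated_pairs S G \<Phi> y) \<sigma> W'"
  unfolding match_def
proof (intro ballI allI impI, clarify)
  fix x z x'
  assume "(x, z) \<in> simulated_pairs S G \<Phi> y" and "(x, \<sigma>, x') \<in> trans G"
  then obtain q' where "((y, x), \<sigma>, q') \<in> trans (sync S G)"
    using assms(1,2) unfolding admissible_def simulated_pairs_def by blast
  with assms(3) show "\<exists>z'. (z, \<sigma>, z') \<in> trans R \<and> (x', z') \<in> W'"
    by (cases q') simp
qed

lemma controllability_set_simulated_pairs:
  assumes "is_automaton S" and "admissible Sigma_uc G S"
    and sim: "cc_simulation Sigma_r (sync S G) R \<Phi>"
  shows "controllability_set Sigma_uc Sigma_r G R (range (simulated_pairs S G \<Phi>))"
  unfolding controllability_set_def
proof (intro conjI)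
  obtain y0 where "y0 \<in> init S"
    using assms(1) unfolding is_automaton_def by blast
  then have "\<forall>x0 \<in> init G. \<exists>z0 \<in> init R. (x0, z0) \<in> simulated_pairs S G \<Phi> y0"
    using sim reachable_init[of "(y0, _)" "sync S G"]
    unfolding cc_simulation_def simulated_pairs_def by fastforce
  then show "\<exists>W0 \<in> range (simulated_pairs S G \<Phi>). \<forall>x0 \<in> init G. \<exists>z0 \<in> init R. (x0, z0) \<in> W0"
    by blast
next
  show "\<forall>W \<in> range (simulated_pairs S G \<Phi>). \<forall>\<sigma> \<in> Sigma_uc.
          \<exists>W' \<in> range (simulated_pairs S G \<Phi>). match G R W \<sigma> W'"
    using match_simulated_pairs[OF sim] match_simulated_pairs_blocked[OF assms(2)] by blast
next
  show "\<forall>W \<in> range (simulated_pairs S G \<Phi>). \<forall>(x, z) \<in> W. \<forall>\<sigma> \<in> Sigma_r. \<forall>z'.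
          (z, \<sigma>, z') \<in> trans R \<longrightarrow> (\<exists>x'. \<exists>W' \<in> range (simulated_pairs S G \<Phi>).
            (x, \<sigma>, x') \<in> trans G \<and> (x', z') \<in> W' \<and> match G R W \<sigma> W')"
  proof (intro ballI allI impI, clarify)
    fix y x z \<sigma> z'
    assume "(x, z) \<in> simulated_pairs S G \<Phi> y" "\<sigma> \<in> Sigma_r" "(z, \<sigma>, z') \<in> trans R"
    then have reach: "reachable (sync S G) (y, x)"
      and "\<exists>q'. ((y, x), \<sigma>, q') \<in> trans (sync S G) \<and> (q', z') \<in> \<Phi>"
      using sim unfolding cc_simulation_def simulated_pairs_def by blast+
    then obtain y' x' where step: "((y, x), \<sigma>, (y', x')) \<in> trans (sync S G)"
      and "((y', x'), z') \<in> \<Phi>" by auto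
    then have "(x', z') \<in> simulated_pairs S G \<Phi> y'"
      using reachable_trans[OF reach step] by (simp add: simulated_pairs_def)
    moreover have "(y, \<sigma>, y') \<in> trans S" and "(x, \<sigma>, x') \<in> trans G"
      using step by simp_all
    ultimately show "\<exists>x'. \<exists>W' \<in> range (simulated_pairs S G \<Phi>). (x, \<sigma>, x') \<in> trans G \<and>
        (x', z') \<in> W' \<and> match G R (simulated_pairs S G \<Phi> y) \<sigma> W'"
      using match_simulated_pairs[OF sim] by blast
  qed
qed

lemma controllability_setD:
  assumes "controllability_set Sigma_uc Sigma_r G R E"
  shows controllability_set_init: "\<exists>W0 \<in> E. \<forall>x0 \<in> init G. \<exists>z0 \<in> init R. (x0, z0) \<in> W0"
    and controllability_set_uncontrollable:
      "\<And>W \<sigma>. W \<in> E \<Longrightarrow> \<sigma> \<in> Sigma_uc \<Longrightarrow> \<exists>W' \<in> E. match G R W \<sigma> W'"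
    and controllability_set_required:
      "\<And>W x z \<sigma> z'. W \<in> E \<Longrightarrow> (x, z) \<in> W \<Longrightarrow> \<sigma> \<in> Sigma_r \<Longrightarrow> (z, \<sigma>, z') \<in> trans R \<Longrightarrow>
         \<exists>x'. \<exists>W' \<in> E. (x, \<sigma>, x') \<in> trans G \<and> (x', z') \<in> W' \<and> match G R W \<sigma> W'"
  using assms unfolding controllability_set_def by fast+

text \<open>States outside E are unreachable; letting them move into E on every event makes the
  supervisor total on uncontrollable events without a reachability argument.\<close>

definition controllability_supervisor ::
  "('x, 'e) automaton \<Rightarrow> ('z, 'e) automaton \<Rightarrow> ('x \<times> 'z) set set \<Rightarrow> ('x \<times> 'z) set
     \<Rightarrow> (('x \<times> 'z) set, 'e) automaton" where
  "controllability_supervisor G R E W0 =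
     ({(W, \<sigma>, W'). W' \<in> E \<and> (W \<in> E \<longrightarrow> match G R W \<sigma> W')}, {W0})"

lemma trans_controllability_supervisor [simp]:
  "(W, \<sigma>, W') \<in> trans (controllability_supervisor G R E W0) \<longleftrightarrow>
     W' \<in> E \<and> (W \<in> E \<longrightarrow> match G R W \<sigma> W')"
  by (simp add: controllability_supervisor_def trans_def)

lemma init_controllability_supervisor [simp]:
  "init (controllability_supervisor G R E W0) = {W0}"
  by (simp add: controllability_supervisor_def init_def)

lemma admissible_controllability_supervisor:
  assumes "controllability_set Sigma_uc Sigma_r G R E" and "W0 \<in> E"
  shows "admissible Sigma_uc G (controllability_supervisor G R E W0)"
proof (rule admissible_if_total)
  fix W \<sigma> assume "\<sigma> \<in> Sigma_uc"
  then show "\<exists>W'. (W, \<sigma>, W') \<in> trans (controllability_supervisor G R E W0)"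
    using assms controllability_set_uncontrollable by (cases "W \<in> E") fastforce+
qed

lemma cc_simulation_controllability_supervisor:
  assumes E: "controllability_set Sigma_uc Sigma_r G R E"
    and "W0 \<in> E" and W0_init: "\<forall>x0 \<in> init G. \<exists>z0 \<in> init R. (x0, z0) \<in> W0"
  shows "cc_simulation Sigma_r (sync (controllability_supervisor G R E W0) G) R
           {((W, x), z). W \<in> E \<and> (x, z) \<in> W}"
  unfolding cc_simulation_def
proof (intro conjI allI impI ballI)
  fix q0 assume "q0 \<in> init (sync (controllability_supervisor G R E W0) G)"
  then show "\<exists>p0 \<in> init R. (q0, p0) \<in> {((W, x), z). W \<in> E \<and> (x, z) \<in> W}"
    using \<open>W0 \<in> E\<close> W0_init by auto
next
  fix q z \<sigma> q'
  assume "(q, z) \<in> {((W, x), z). W \<in> E \<and> (x, z) \<in> W}"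
    and "(q, \<sigma>, q') \<in> trans (sync (controllability_supervisor G R E W0) G)"
  moreover obtain W x W' x' where q: "q = (W, x)" and q': "q' = (W', x')"
    by (cases q, cases q')
  ultimately have "(x, z) \<in> W" "match G R W \<sigma> W'" "(x, \<sigma>, x') \<in> trans G" "W' \<in> E"
    by simp_all
  then obtain z' where "(z, \<sigma>, z') \<in> trans R" "(x', z') \<in> W'"
    unfolding match_def by blast
  with \<open>W' \<in> E\<close> show "\<exists>z'. (z, \<sigma>, z') \<in> trans R \<and> (q', z') \<in> {((W, x), z). W \<in> E \<and> (x, z) \<in> W}"
    using q' by blast
next
  fix q z \<sigma> z'
  assume "(q, z) \<in> {((W, x), z). W \<in> E \<and> (x, z) \<in> W}" "\<sigma> \<in> Sigma_r" "(z, \<sigma>, z') \<in> trans R"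
  moreover obtain W x where q: "q = (W, x)"
    by (cases q)
  ultimately obtain x' W' where "W \<in> E" "W' \<in> E" "(x, \<sigma>, x') \<in> trans G" "(x', z') \<in> W'"
    "match G R W \<sigma> W'"
    using controllability_set_required[OF E] by force
  then show "\<exists>q'. (q, \<sigma>, q') \<in> trans (sync (controllability_supervisor G R E W0) G) \<and>
      (q', z') \<in> {((W, x), z). W \<in> E \<and> (x, z) \<in> W}"
    using q by auto
qed

lemma controllability_set_if_supervisor:
  assumes "is_automaton S" and "admissible Sigma_uc G S" and "cc_le Sigma_r (sync S G) R"
  shows "\<exists>E. controllability_set Sigma_uc Sigma_r G R E"
  using assms controllability_set_simulated_pairs unfolding cc_le_def by blast

lemma supervisor_if_controllability_set:
  fixes G :: "('x, 'e) automaton" and R :: "('z, 'e) automaton"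
  assumes E: "controllability_set Sigma_uc Sigma_r G R E"
  shows "\<exists>S :: (('x \<times> 'z) set, 'e) automaton.
           is_automaton S \<and> admissible Sigma_uc G S \<and> cc_le Sigma_r (sync S G) R"
proof -
  obtain W0 where "W0 \<in> E" and W0_init: "\<forall>x0 \<in> init G. \<exists>z0 \<in> init R. (x0, z0) \<in> W0"
    using controllability_set_init[OF E] by blast
  let ?S = "controllability_supervisor G R E W0"
  have "is_automaton ?S"
    by (simp add: is_automaton_def)
  moreover have "admissible Sigma_uc G ?S"
    using admissible_controllability_supervisor[OF E \<open>W0 \<in> E\<close>] .
  moreover have "cc_le Sigma_r (sync ?S G) R"
    using cc_simulation_controllability_supervisor[OF E \<open>W0 \<in> E\<close> W0_init]
    unfolding cc_le_def by blast
  ultimately show ?thesis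
    by blast
qed

theorem theorem1:
  fixes G :: "('x, 'e :: finite) automaton"
    and R :: "('z, 'e) automaton"
    and Sigma_uc Sigma_c Sigma_r :: "'e set"
  assumes "is_automaton G" and "is_automaton R"
    and "Sigma_uc \<inter> Sigma_c = {}" and "Sigma_uc \<union> Sigma_c = UNIV"
  shows "((\<exists>S :: ('y, 'e) automaton.
             is_automaton S \<and> admissible Sigma_uc G S \<and> cc_le Sigma_r (sync S G) R)
           \<longrightarrow> (\<exists>E. controllability_set Sigma_uc Sigma_r G R E))
       \<and> ((\<exists>S :: (('x \<times> 'z) set, 'e) automaton.
             is_automaton S \<and> admissible Sigma_uc G S \<and> cc_le Sigma_r (sync S G) R)
           \<longleftrightarrow> (\<exists>E. controllability_set Sigma_uc Sigma_r G R E))"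
  using controllability_set_if_supervisor supervisor_if_controllability_set by metis

end
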